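(* Let $A=\{1,2,3\}\cup\{5\cdot 2^i : i\ge 0\}=\{1,2,3,5,10,20,40,\dots\}$. Then for every $n\ge 1$, $\mathrm{Total}(n,A)=\lfloor 5\cdot 2^{n-2}-1\rfloor$ (i.e., the values are $1,4,9,19,39,79,\dots$).
   Context: For an integer $n\ge 0$ and a set $A$ of positive integers with $1\in A$, the abstract generalized 2048 game $\mathrm{AGG}(n,A)$ is played on $n$ indistinguishable cells. A position assigns to each cell either nothing (empty) or a tile with a value in $A$; the initial position has all cells empty. A step, performable from any position with at least one empty cell, consists of: (i) placing a new tile of value $1$ into a chosen empty cell; then (ii) optionally choosing pairwise disjoint sets of nonempty cells, each with tile-value sum in $A$, and merging each set into a single tile of that sum placed in one of its cells, the other cells of the set becoming empty. The game ends when after a step all cells are nonempty. A position is reachable if obtainable from the initial position by finitely many steps; its total value is the sum of its tile values. $\mathrm{Total}(n,A)$ is the supremum of total values of reachable positions of $\mathrm{AGG}(n,A)$. *)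

theory Defs
  imports Complex_Main "HOL-Library.Extended_Nat"
begin

text \<open>Positions of AGG(n,A): cells are the numbers 0..<n; a cell holds None (empty)
  or Some v (a tile of value v). Cells outside {..<n} stay empty.\<close>

type_synonym position = "nat \<Rightarrow> nat option"

definition merge :: "nat set \<Rightarrow> position \<Rightarrow> position \<Rightarrow> bool" where
  "merge A p q \<longleftrightarrow>
     (\<exists>F r. finite F \<and>
        (\<forall>S\<in>F. S \<noteq> {} \<and> finite S \<and> S \<subseteq> {i. p i \<noteq> None} \<and> r S \<in> S \<and>
                 (\<Sum>i\<in>S. the (p i)) \<in> A) \<and>
        (\<forall>S\<in>F. \<forall>T\<in>F. S \<noteq> T \<longrightarrow> S \<inter> T = {}) \<and>
        (\<forall>S\<in>F. q (r S) = Some (\<Sum>i\<in>S. the (p i)) \<and> (\<forall>i\<in>S - {r S}. q i = None)) \<and>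
        (\<forall>i. (\<forall>S\<in>F. i \<notin> S) \<longrightarrow> q i = p i))"

definition game_step :: "nat \<Rightarrow> nat set \<Rightarrow> position \<Rightarrow> position \<Rightarrow> bool" where
  "game_step n A p q \<longleftrightarrow> (\<exists>c<n. p c = None \<and> merge A (p(c := Some 1)) q)"

definition reachable :: "nat \<Rightarrow> nat set \<Rightarrow> position \<Rightarrow> bool" where
  "reachable n A p \<longleftrightarrow> (game_step n A)\<^sup>*\<^sup>* (\<lambda>_. None) p"

definition total_value :: "nat \<Rightarrow> position \<Rightarrow> nat" where
  "total_value n p = (\<Sum>i<n. case p i of None \<Rightarrow> 0 | Some v \<Rightarrow> v)"

definition Total :: "nat \<Rightarrow> nat set \<Rightarrow> enat" where
  "Total n A = (SUP p\<in>{p. reachable n A p}. enat (total_value n p))"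

end

theory Submission
  imports Defs
begin

text \<open>
  Let \<open>m 1 < m 2 < \<dots>\<close> be \<open>1, 3, 5, 10, 20, \<dots>\<close>. Every element of \<open>A\<close> above \<open>m i\<close>
  already exceeds \<open>m 1 + \<dots> + m i\<close>. This keeps the invariant that the \<open>k\<close>-th largest tile
  on \<open>n\<close> cells is at most \<open>m (n + 1 - k)\<close>: a merge producing a tile above \<open>m i\<close> either
  swallows a tile that was already above \<open>m i\<close>, or consists of tiles of value at most \<open>m i\<close>
  summing to more than \<open>m 1 + \<dots> + m i\<close>, and the invariant bounds the truncated total
  \<open>\<Sum> min v (m i)\<close> so tightly that there is room for too few merges of the second kind.
  Hence every total is at most \<open>m 1 + \<dots> + m n = 5 \<cdot> 2 ^ (n - 2) - 1\<close>.

  Conversely \<open>k\<close> empty cells suffice to assemble a tile \<open>m k\<close> (by hand for \<open>k \<le> 3\<close>, and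
  via \<open>m k = 2 \<cdot> m (k - 1)\<close> for \<open>k \<ge> 4\<close>), so the board can be filled with
  \<open>m n, m (n - 1), \<dots>, m 1\<close>.
\<close>

definition tile_value :: "nat option \<Rightarrow> nat" where
  "tile_value x = (case x of None \<Rightarrow> 0 | Some v \<Rightarrow> v)"

lemma tile_value_simps [simp]: "tile_value None = 0" "tile_value (Some v) = v"
  by (simp_all add: tile_value_def)

lemma total_value_eq: "total_value n p = (\<Sum>y<n. tile_value (p y))"
  by (simp add: total_value_def tile_value_def)

definition cells_above :: "nat \<Rightarrow> position \<Rightarrow> nat \<Rightarrow> nat set" where
  "cells_above n p t = {y\<in>{..<n}. t < tile_value (p y)}"

abbreviation count_above :: "nat \<Rightarrow> position \<Rightarrow> nat \<Rightarrow> nat" where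
  "count_above n p t \<equiv> card (cells_above n p t)"

lemma finite_cells_above [simp]: "finite (cells_above n p t)"
  by (simp add: cells_above_def)

lemma sum_min_layer_cake:
  fixes f :: "'a \<Rightarrow> nat"
  assumes "finite Y"
  shows "(\<Sum>y\<in>Y. min (f y) t) = (\<Sum>u<t. card {y\<in>Y. u < f y})"
proof -
  have "(\<Sum>y\<in>Y. min (f y) t) = (\<Sum>y\<in>Y. \<Sum>u<t. if u < f y then 1 else 0)"
  proof (rule sum.cong)
    fix y
    have "{u\<in>{..<t}. u < f y} = {..<min (f y) t}" by auto
    then show "min (f y) t = (\<Sum>u<t. if u < f y then 1 else 0)"
      by (simp add: sum.inter_filter[symmetric])
  qed simp
  also have "\<dots> = (\<Sum>u<t. \<Sum>y\<in>Y. if u < f y then 1 else 0)"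
    by (rule sum.swap)
  also have "\<dots> = (\<Sum>u<t. card {y\<in>Y. u < f y})"
    using assms by (simp add: sum.inter_filter[symmetric])
  finally show ?thesis .
qed

lemma sum_min_tile_value: "(\<Sum>y<n. min (tile_value (p y)) t) = (\<Sum>u<t. count_above n p u)"
  unfolding cells_above_def by (rule sum_min_layer_cake) simp

lemma sum_min_tile_value_split:
  "(\<Sum>y<n. min (tile_value (p y)) t)
     = (\<Sum>y\<in>{..<n} - cells_above n p t. tile_value (p y)) + t * count_above n p t"
proof -
  have "(\<Sum>y<n. min (tile_value (p y)) t)
        = (\<Sum>y\<in>{..<n} - cells_above n p t. min (tile_value (p y)) t)
          + (\<Sum>y\<in>cells_above n p t. min (tile_value (p y)) t)"
    by (rule sum.subset_diff) (auto simp: cells_above_def)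
  moreover have "(\<Sum>y\<in>{..<n} - cells_above n p t. min (tile_value (p y)) t)
                 = (\<Sum>y\<in>{..<n} - cells_above n p t. tile_value (p y))"
    by (rule sum.cong) (auto simp: cells_above_def)
  moreover have "(\<Sum>y\<in>cells_above n p t. min (tile_value (p y)) t) = t * count_above n p t"
    by (simp add: cells_above_def)
  ultimately show ?thesis by simp
qed

lemma sum_update_empty_cell:
  fixes g :: "nat option \<Rightarrow> 'a::comm_monoid_add" and p :: position
  assumes "c < n" "p c = None"
  shows "(\<Sum>y<n. g ((p(c := x)) y)) + g None = (\<Sum>y<n. g (p y)) + g x"
proof -
  have "(\<Sum>y\<in>{..<n} - {c}. g ((p(c := x)) y)) = (\<Sum>y\<in>{..<n} - {c}. g (p y))"
    by (rule sum.cong) auto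
  moreover have "(\<Sum>y<n. g ((p(c := x)) y)) = g x + (\<Sum>y\<in>{..<n} - {c}. g ((p(c := x)) y))"
    using assms(1) by (subst sum.remove[of _ c]) simp_all
  ultimately have "(\<Sum>y<n. g ((p(c := x)) y)) = g x + (\<Sum>y\<in>{..<n} - {c}. g (p y))"
    by simp
  moreover have "(\<Sum>y<n. g (p y)) = g None + (\<Sum>y\<in>{..<n} - {c}. g (p y))"
    using assms by (simp add: sum.remove)
  ultimately show ?thesis by (simp add: ac_simps)
qed

lemma add_le_of_mult_Suc_le:
  fixes b c t T K :: nat
  assumes "c * (T + 1) + t * b \<le> T + K * t" "t \<le> T" "b \<le> K"
  shows "c + b \<le> K"
proof (rule ccontr)
  assume "\<not> c + b \<le> K"
  moreover define e where "e = K - b"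
  ultimately have e: "K = e + b" "e + 1 \<le> c" using assms(3) by simp_all
  have "c * (T + 1) + t * b \<le> T + (e + b) * t" using assms(1) e(1) by simp
  then have "(e + 1) * (T + 1) + t * b \<le> T + (e + b) * t"
    using mult_le_mono1[OF e(2), of "T + 1"] by linarith
  then have "e * T + e + T + 1 + t * b \<le> T + e * t + t * b" by (simp add: algebra_simps)
  moreover have "e * t \<le> e * T" using assms(2) by (rule mult_le_mono2)
  ultimately show False by linarith
qed

definition tile_sum :: "position \<Rightarrow> nat set \<Rightarrow> nat" where
  "tile_sum p W = (\<Sum>j\<in>W. the (p j))"

locale merge_phase =
  fixes A :: "nat set" and p q :: position and F :: "nat set set" and r :: "nat set \<Rightarrow> nat"
  assumes finite_blocks: "finite F"
    and block: "S \<in> F \<Longrightarrow> S \<noteq> {} \<and> finite S \<and> S \<subseteq> {i. p i \<noteq> None} \<and> r S \<in> S \<and>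
                  tile_sum p S \<in> A"
    and disjoint_blocks: "S \<in> F \<Longrightarrow> T \<in> F \<Longrightarrow> S \<noteq> T \<Longrightarrow> S \<inter> T = {}"
    and merged: "S \<in> F \<Longrightarrow> q (r S) = Some (tile_sum p S) \<and> (\<forall>i\<in>S - {r S}. q i = None)"
    and untouched: "(\<forall>S\<in>F. i \<notin> S) \<Longrightarrow> q i = p i"

lemma merge_iff_merge_phase: "merge A p q \<longleftrightarrow> (\<exists>F r. merge_phase A p q F r)"
  unfolding merge_def merge_phase_def tile_sum_def by (intro iff_exI) auto

context merge_phase
begin

definition blocks_hitting_above :: "nat \<Rightarrow> nat set set" where
  "blocks_hitting_above t = {S\<in>F. \<exists>y\<in>S. t < tile_value (p y)}"

definition blocks_crossing :: "nat \<Rightarrow> nat set set" where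
  "blocks_crossing t = {S\<in>F. (\<forall>y\<in>S. tile_value (p y) \<le> t) \<and> t < tile_sum p S}"

lemma block_subset_lessThan:
  assumes "\<forall>i\<ge>n. p i = None" "S \<in> F"
  shows "S \<subseteq> {..<n}"
proof
  fix i assume "i \<in> S"
  then have "p i \<noteq> None" using block[OF assms(2)] by blast
  then show "i \<in> {..<n}" using assms(1) by (metis lessThan_iff not_le)
qed

lemma merged_outside:
  assumes "\<forall>i\<ge>n. p i = None" "n \<le> i"
  shows "q i = None"
proof -
  have "i \<notin> S" if "S \<in> F" for S
    using block_subset_lessThan[OF assms(1) that] assms(2) by auto
  then show ?thesis using untouched assms by auto
qed

lemma cells_above_merged_subset:
  "cells_above n q t \<subseteq>
     (cells_above n p t - \<Union>F) \<union> r ` blocks_hitting_above t \<union> r ` blocks_crossing t"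
proof
  fix y assume y: "y \<in> cells_above n q t"
  show "y \<in> (cells_above n p t - \<Union>F) \<union> r ` blocks_hitting_above t \<union> r ` blocks_crossing t"
  proof (cases "\<exists>S\<in>F. y \<in> S")
    case False
    then show ?thesis using y untouched by (auto simp: cells_above_def)
  next
    case True
    then obtain S where S: "S \<in> F" "y \<in> S" by blast
    have "y = r S"
      using y merged[OF S(1)] S(2) by (cases "y = r S") (auto simp: cells_above_def)
    then have "t < tile_sum p S"
      using y merged[OF S(1)] by (auto simp: cells_above_def tile_sum_def)
    then have "S \<in> blocks_hitting_above t \<or> S \<in> blocks_crossing t"
      using S by (auto simp: blocks_hitting_above_def blocks_crossing_def not_le)
    then show ?thesis using \<open>y = r S\<close> by blast
  qed
qed

lemma card_blocks_hitting_above: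
  assumes "\<forall>i\<ge>n. p i = None"
  shows "card (blocks_hitting_above t) \<le> card (cells_above n p t \<inter> \<Union>F)"
proof -
  let ?H = "blocks_hitting_above t"
  have "card ?H \<le> (\<Sum>S\<in>?H. card (S \<inter> cells_above n p t))"
  proof -
    have "1 \<le> card (S \<inter> cells_above n p t)" if S: "S \<in> ?H" for S
    proof -
      obtain y where "S \<in> F" "y \<in> S" "t < tile_value (p y)"
        using S by (auto simp: blocks_hitting_above_def)
      then have "y \<in> S \<inter> cells_above n p t"
        using block_subset_lessThan[OF assms] by (auto simp: cells_above_def)
      then show ?thesis
        using block[OF \<open>S \<in> F\<close>] by (metis One_nat_def Suc_leI card_gt_0_iff empty_iff finite_Int)
    qed
    then have "(\<Sum>S\<in>?H. 1) \<le> (\<Sum>S\<in>?H. card (S \<inter> cells_above n p t))"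
      by (intro sum_mono) auto
    then show ?thesis by simp
  qed
  also have "\<dots> = card (\<Union>S\<in>?H. S \<inter> cells_above n p t)"
    using finite_blocks block disjoint_blocks
    by (subst card_UN_disjoint) (auto simp: blocks_hitting_above_def)
  also have "\<dots> \<le> card (cells_above n p t \<inter> \<Union>F)"
    by (rule card_mono) (auto simp: blocks_hitting_above_def)
  finally show ?thesis .
qed

lemma card_blocks_crossing:
  assumes "\<forall>i\<ge>n. p i = None"
    and gap: "\<And>a. a \<in> A \<Longrightarrow> t < a \<Longrightarrow> T < a"
  shows "card (blocks_crossing t) * (T + 1) \<le> (\<Sum>y\<in>{..<n} - cells_above n p t. tile_value (p y))"
proof -
  let ?C = "blocks_crossing t"
  have "card ?C * (T + 1) \<le> (\<Sum>S\<in>?C. tile_sum p S)"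
  proof -
    have "T + 1 \<le> tile_sum p S" if "S \<in> ?C" for S
    proof -
      have "S \<in> F" "t < tile_sum p S" using that by (simp_all add: blocks_crossing_def)
      then show ?thesis using block gap by (simp add: tile_sum_def Suc_le_eq)
    qed
    then have "(\<Sum>S\<in>?C. T + 1) \<le> (\<Sum>S\<in>?C. tile_sum p S)"
      by (intro sum_mono) auto
    then show ?thesis by simp
  qed
  also have "\<dots> = (\<Sum>y\<in>\<Union>?C. the (p y))"
    unfolding tile_sum_def using finite_blocks block disjoint_blocks
    by (subst sum.Union_disjoint) (auto simp: blocks_crossing_def)
  also have "\<dots> = (\<Sum>y\<in>\<Union>?C. tile_value (p y))"
  proof (rule sum.cong)
    fix y assume "y \<in> \<Union>?C"
    then have "p y \<noteq> None" using block by (auto simp: blocks_crossing_def)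
    then show "the (p y) = tile_value (p y)" by (auto simp: tile_value_def)
  qed simp
  also have "\<dots> \<le> (\<Sum>y\<in>{..<n} - cells_above n p t. tile_value (p y))"
    using block_subset_lessThan[OF assms(1)]
    by (intro sum_mono2) (auto simp: blocks_crossing_def cells_above_def not_less)
  finally show ?thesis .
qed

lemma count_above_merged_le:
  fixes t T K :: nat
  assumes outside: "\<forall>i\<ge>n. p i = None"
    and gap: "\<And>a. a \<in> A \<Longrightarrow> t < a \<Longrightarrow> T < a" and "t \<le> T"
    and budget: "(\<Sum>y<n. min (tile_value (p y)) t) \<le> T + K * t"
    and above: "count_above n p t \<le> K"
  shows "count_above n q t \<le> K"
proof -
  let ?P = "cells_above n p t"
  define small where "small = (\<Sum>y\<in>{..<n} - ?P. tile_value (p y))"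
  have "small + t * card ?P \<le> T + K * t"
    using budget sum_min_tile_value_split[of p t n] by (simp add: small_def)
  moreover have "card (blocks_crossing t) * (T + 1) \<le> small"
    unfolding small_def by (rule card_blocks_crossing[OF outside gap])
  ultimately have "card (blocks_crossing t) * (T + 1) + t * card ?P \<le> T + K * t" by simp
  then have crossing: "card (blocks_crossing t) + card ?P \<le> K"
    using \<open>t \<le> T\<close> above by (rule add_le_of_mult_Suc_le)
  let ?H = "blocks_hitting_above t" and ?C = "blocks_crossing t"
  have finite: "finite ?H" "finite ?C"
    using finite_blocks by (simp_all add: blocks_hitting_above_def blocks_crossing_def)
  have "count_above n q t \<le> card ((?P - \<Union>F) \<union> r ` ?H \<union> r ` ?C)"
    using finite by (intro card_mono[OF _ cells_above_merged_subset]) simp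
  also have "\<dots> \<le> card (?P - \<Union>F) + card (r ` ?H) + card (r ` ?C)"
    using card_Un_le[of "(?P - \<Union>F) \<union> r ` ?H" "r ` ?C"] card_Un_le[of "?P - \<Union>F" "r ` ?H"]
    by linarith
  also have "\<dots> \<le> card (?P - \<Union>F) + card ?H + card ?C"
    using card_image_le[OF finite(1), of r] card_image_le[OF finite(2), of r] by linarith
  also have "\<dots> \<le> card (?P - \<Union>F) + card (?P \<inter> \<Union>F) + card (blocks_crossing t)"
    using card_blocks_hitting_above[OF outside] by simp
  also have "card (?P - \<Union>F) + card (?P \<inter> \<Union>F) = card ?P"
    using card_Int_Diff[of ?P "\<Union>F"] by simp
  finally show ?thesis using crossing by simp
qed

end

locale partial_sum_gaps =
  fixes A :: "nat set" and m :: "nat \<Rightarrow> nat"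
  assumes strict_mono_m: "strict_mono m"
    and gap: "\<And>a i. a \<in> A \<Longrightarrow> 1 \<le> i \<Longrightarrow> m i < a \<Longrightarrow> (\<Sum>l=1..i. m l) < a"
begin

definition bound_above :: "nat \<Rightarrow> nat \<Rightarrow> nat" where
  "bound_above n u = card {l\<in>{1..n}. u < m l}"

text \<open>\<open>dominated n p\<close>: the \<open>k\<close>-th largest tile of \<open>p\<close> is at most \<open>m (n + 1 - k)\<close>.\<close>

definition dominated :: "nat \<Rightarrow> position \<Rightarrow> bool" where
  "dominated n p \<longleftrightarrow> (\<forall>i\<ge>n. p i = None) \<and> (\<forall>u. count_above n p u \<le> bound_above n u)"

lemma dominated_count_above: "dominated n p \<Longrightarrow> count_above n p u \<le> bound_above n u"
  by (simp add: dominated_def)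

lemma dominated_outside: "dominated n p \<Longrightarrow> n \<le> i \<Longrightarrow> p i = None"
  by (simp add: dominated_def)

lemma m_less_iff [simp]: "m k < m l \<longleftrightarrow> k < l"
  using strict_mono_less[OF strict_mono_m] .

lemma m_le_iff [simp]: "m k \<le> m l \<longleftrightarrow> k \<le> l"
  using strict_mono_less_eq[OF strict_mono_m] .

lemma bound_above_m:
  assumes "i \<le> n"
  shows "bound_above n (m i) = n - i"
proof -
  have "{l\<in>{1..n}. m i < m l} = {Suc i..n}" using assms by auto
  then show ?thesis by (simp add: bound_above_def)
qed

lemma bound_above_below_m1:
  assumes "u < m 1"
  shows "bound_above n u = n"
proof -
  have "u < m l" if "1 \<le> l" for l
    using assms m_le_iff[of 1 l] that by linarith
  then have "{l\<in>{1..n}. u < m l} = {1..n}" by auto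
  then show ?thesis by (simp add: bound_above_def)
qed

lemma sum_bound_above:
  assumes "1 \<le> i" "i \<le> n"
  shows "(\<Sum>u<m i. bound_above n u) = (\<Sum>l=1..i. m l) + (n - i) * m i"
proof -
  have "(\<Sum>u<m i. bound_above n u) = (\<Sum>l=1..n. min (m l) (m i))"
    unfolding bound_above_def by (rule sum_min_layer_cake[symmetric]) simp
  also have "\<dots> = (\<Sum>l=1..i. min (m l) (m i)) + (\<Sum>l=Suc i..n. min (m l) (m i))"
  proof -
    have "{1..n} = {1..i} \<union> {Suc i..n}" using assms by auto
    then show ?thesis by (simp add: sum.union_disjoint)
  qed
  also have "(\<Sum>l=1..i. min (m l) (m i)) = (\<Sum>l=1..i. m l)"
    by (rule sum.cong) (auto simp: min_def)
  also have "(\<Sum>l=Suc i..n. min (m l) (m i)) = (n - i) * m i"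
    by (simp add: min_def)
  finally show ?thesis .
qed

lemma dominatedI:
  assumes outside: "\<forall>i\<ge>n. p i = None"
    and thresholds: "\<And>i. 1 \<le> i \<Longrightarrow> i \<le> n \<Longrightarrow> count_above n p (m i) \<le> n - i"
  shows "dominated n p"
proof -
  have "count_above n p u \<le> bound_above n u" for u
  proof (cases "u < m 1 \<or> n = 0")
    case True
    have "count_above n p u \<le> n"
      using card_mono[of "{..<n}" "cells_above n p u"] by (auto simp: cells_above_def)
    then show ?thesis using True bound_above_below_m1 by (auto simp: bound_above_def)
  next
    case False
    define i where "i = Max {l\<in>{1..n}. m l \<le> u}"
    have "i \<in> {l\<in>{1..n}. m l \<le> u}"
      unfolding i_def using False by (intro Max_in) (auto intro!: exI[of _ 1])
    then have i: "1 \<le> i" "i \<le> n" "m i \<le> u" by auto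
    have le_i: "m l \<le> u \<longleftrightarrow> l \<le> i" if "l \<in> {1..n}" for l
    proof
      show "m l \<le> u \<Longrightarrow> l \<le> i" unfolding i_def using that by (intro Max_ge) auto
      show "l \<le> i \<Longrightarrow> m l \<le> u" using i(3) by (meson le_trans m_le_iff)
    qed
    have "{l\<in>{1..n}. u < m l} = {Suc i..n}"
    proof (intro set_eqI iffI)
      fix l assume "l \<in> {l\<in>{1..n}. u < m l}"
      then show "l \<in> {Suc i..n}" using le_i[of l] by auto
    next
      fix l assume l: "l \<in> {Suc i..n}"
      then have "l \<in> {1..n}" using i(1) by auto
      then show "l \<in> {l\<in>{1..n}. u < m l}" using l le_i[of l] by auto
    qed
    then have "bound_above n u = n - i" by (simp add: bound_above_def)
    moreover have "count_above n p u \<le> count_above n p (m i)"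
      using i(3) by (intro card_mono) (auto simp: cells_above_def)
    ultimately show ?thesis using thresholds[OF i(1,2)] by simp
  qed
  then show ?thesis using outside by (simp add: dominated_def)
qed

lemma truncated_total_less:
  assumes dom: "dominated n p" and c: "c < n" "p c = None" and i: "1 \<le> i" "i \<le> n"
  shows "(\<Sum>y<n. min (tile_value (p y)) (m i)) < (\<Sum>l=1..i. m l) + (n - i) * m i"
proof -
  have "(\<Sum>y<n. min (tile_value (p y)) (m i)) = (\<Sum>u<m i. count_above n p u)"
    by (rule sum_min_tile_value)
  also have "\<dots> < (\<Sum>u<m i. bound_above n u)"
  proof (rule sum_strict_mono_ex1)
    show "\<forall>u\<in>{..<m i}. count_above n p u \<le> bound_above n u"
      using dom by (simp add: dominated_def)
    have "cells_above n p 0 \<subseteq> {..<n} - {c}" using c by (auto simp: cells_above_def)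
    then have "count_above n p 0 < n"
      using c card_mono[of "{..<n} - {c}" "cells_above n p 0"] by simp
    moreover have "0 < m 1" "0 < m i"
      using strict_mono_imp_increasing[OF strict_mono_m] i by (metis less_le_trans zero_less_one)+
    ultimately show "\<exists>u\<in>{..<m i}. count_above n p u < bound_above n u"
      using bound_above_below_m1[of 0 n] by (intro bexI[of _ 0]) auto
  qed simp
  also have "\<dots> = (\<Sum>l=1..i. m l) + (n - i) * m i"
    using i by (rule sum_bound_above)
  finally show ?thesis .
qed

lemma count_above_after_step:
  assumes dom: "dominated n p" and c: "c < n" "p c = None"
    and mg: "merge A (p(c := Some 1)) q" and i: "1 \<le> i" "i \<le> n"
  shows "count_above n q (m i) \<le> n - i"
proof -
  define p' where "p' = p(c := Some 1)"
  obtain F r where "merge_phase A p' q F r"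
    using mg merge_iff_merge_phase p'_def by blast
  then interpret merge_phase A p' q F r .
  have "1 \<le> m i" using strict_mono_imp_increasing[OF strict_mono_m, of i] i by linarith
  then have "cells_above n p' (m i) = cells_above n p (m i)"
    using c by (auto simp: cells_above_def p'_def)
  then have above: "count_above n p' (m i) \<le> n - i"
    using dominated_count_above[OF dom, of "m i"] bound_above_m[OF i(2)] by simp
  have "(\<Sum>y<n. min (tile_value (p' y)) (m i)) = (\<Sum>y<n. min (tile_value (p y)) (m i)) + 1"
    using sum_update_empty_cell[of c n p "\<lambda>v. min (tile_value v) (m i)"] c \<open>1 \<le> m i\<close>
    by (simp add: p'_def)
  then have budget: "(\<Sum>y<n. min (tile_value (p' y)) (m i)) \<le> (\<Sum>l=1..i. m l) + (n - i) * m i"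
    using truncated_total_less[OF dom c i] by simp
  have outside: "\<forall>i\<ge>n. p' i = None"
    using dominated_outside[OF dom] c by (simp add: p'_def)
  have "m i \<le> (\<Sum>l=1..i. m l)"
    using i by (intro member_le_sum) auto
  then show ?thesis
    using count_above_merged_le[OF outside gap[OF _ i(1)] _ budget above] by simp
qed

lemma dominated_game_step:
  assumes "dominated n p" "game_step n A p q"
  shows "dominated n q"
proof -
  obtain c where c: "c < n" "p c = None" and mg: "merge A (p(c := Some 1)) q"
    using assms(2) unfolding game_step_def by blast
  obtain F r where mp: "merge_phase A (p(c := Some 1)) q F r"
    using mg merge_iff_merge_phase by blast
  have "\<forall>i\<ge>n. (p(c := Some 1)) i = None"
    using dominated_outside[OF assms(1)] c by simp
  then have "q i = None" if "n \<le> i" for i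
    using merge_phase.merged_outside[OF mp] that by blast
  then show ?thesis
    using count_above_after_step[OF assms(1) c mg] by (intro dominatedI) auto
qed

lemma dominated_reachable:
  assumes "reachable n A p"
  shows "dominated n p"
  using assms[unfolded reachable_def]
proof (induction rule: rtranclp_induct)
  case base
  then show ?case by (simp add: dominated_def cells_above_def)
next
  case (step p q)
  then show ?case using dominated_game_step by blast
qed

lemma total_value_le_of_dominated:
  assumes "dominated n p"
  shows "total_value n p \<le> (\<Sum>l=1..n. m l)"
proof (cases "n = 0")
  case True
  then show ?thesis by (simp add: total_value_def)
next
  case False
  then have "count_above n p (m n) = 0"
    using dominated_count_above[OF assms, of "m n"] bound_above_m[of n n] by simp
  then have "cells_above n p (m n) = {}" by simp
  then have small: "tile_value (p y) \<le> m n" if "y < n" for y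
    using that unfolding cells_above_def by (metis (mono_tags) empty_iff lessThan_iff mem_Collect_eq not_le)
  have "total_value n p = (\<Sum>y<n. min (tile_value (p y)) (m n))"
    unfolding total_value_eq using small by (intro sum.cong) auto
  also have "\<dots> = (\<Sum>u<m n. count_above n p u)"
    by (rule sum_min_tile_value)
  also have "\<dots> \<le> (\<Sum>u<m n. bound_above n u)"
    using dominated_count_above[OF assms] by (rule sum_mono)
  also have "\<dots> = (\<Sum>l=1..n. m l)"
    using sum_bound_above[of n n] False by simp
  finally show ?thesis .
qed

lemma Total_le: "Total n A \<le> enat (\<Sum>l=1..n. m l)"
  unfolding Total_def
  using total_value_le_of_dominated[OF dominated_reachable] by (auto intro!: SUP_least)

end

fun max_tile :: "nat \<Rightarrow> nat" where
  "max_tile 0 = 0"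
| "max_tile (Suc 0) = 1"
| "max_tile (Suc (Suc 0)) = 3"
| "max_tile (Suc (Suc (Suc j))) = 5 * 2 ^ j"

abbreviation A5 :: "nat set" where
  "A5 \<equiv> {1, 2, 3} \<union> range (\<lambda>i::nat. 5 * 2 ^ i)"

lemma max_tile_in_A5: "1 \<le> k \<Longrightarrow> max_tile k \<in> A5"
  by (cases k rule: max_tile.cases) auto

lemma max_tile_double:
  assumes "4 \<le> k"
  shows "max_tile k = 2 * max_tile (k - 1)"
proof -
  have "k = Suc (Suc (Suc (Suc (k - 4))))" using assms by arith
  then show ?thesis by (metis diff_Suc_1 max_tile.simps(4) mult.left_commute power_Suc)
qed

lemma strict_mono_max_tile: "strict_mono max_tile"
proof (rule strict_mono_Suc_iff[THEN iffD2], intro allI)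
  fix k show "max_tile k < max_tile (Suc k)"
    by (cases k rule: max_tile.cases) auto
qed

lemma sum_max_tile_Suc_Suc: "(\<Sum>l=1..Suc (Suc j). max_tile l) = 5 * 2 ^ j - 1"
proof (induction j)
  case 0
  then show ?case by (simp add: numeral_eq_Suc)
next
  case (Suc j)
  have "(1::nat) \<le> 5 * 2 ^ j" by simp
  then show ?case using Suc by simp
qed

lemma A5_partial_sum_gap:
  assumes "a \<in> A5" "1 \<le> i" "max_tile i < a"
  shows "(\<Sum>l=1..i. max_tile l) < a"
proof (cases i rule: max_tile.cases)
  case 3
  then obtain k where "a = 5 * 2 ^ k" using assms by auto
  moreover have "(1::nat) \<le> 2 ^ k" by simp
  ultimately have "5 \<le> a" by simp
  moreover have "(\<Sum>l=1..i. max_tile l) = 4" using 3 sum_max_tile_Suc_Suc[of 0] by simp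
  ultimately show ?thesis by simp
next
  case (4 j)
  have "(1::nat) \<le> 2 ^ j" "max_tile i = 5 * 2 ^ j" using 4 by simp_all
  then have "3 < a" using assms(3) by linarith
  then obtain k where k: "a = 5 * 2 ^ k" using assms(1) by auto
  then have "j < k" using assms(3) 4 by simp
  then have "(2::nat) ^ Suc j \<le> 2 ^ k" by (intro power_increasing) auto
  moreover have "(\<Sum>l=1..i. max_tile l) = 5 * 2 ^ Suc j - 1"
    using 4 by (simp only: sum_max_tile_Suc_Suc)
  moreover have "(1::nat) \<le> 2 ^ Suc j" by simp
  ultimately show ?thesis using k by linarith
qed (use assms in auto)

interpretation A5: partial_sum_gaps A5 max_tile
  by unfold_locales (use strict_mono_max_tile A5_partial_sum_gap in auto)

definition gather :: "position \<Rightarrow> nat set \<Rightarrow> nat \<Rightarrow> nat \<Rightarrow> position" where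
  "gather p X z v = (\<lambda>i. if i = z then Some v else if i \<in> X then None else p i)"

lemma gather_empty_cells: "\<forall>i\<in>X. p i = None \<Longrightarrow> gather p X z v = p(z := Some v)"
  by (auto simp: gather_def)

lemma gather_gather:
  "z \<in> X \<Longrightarrow> gather (gather p Y z a) X z' v = gather p (X \<union> Y) z' v"
  by (auto simp: gather_def)

lemma tile_sum_gather_disjoint:
  "W \<inter> insert z Y = {} \<Longrightarrow> tile_sum (gather p Y z a) W = tile_sum p W"
  unfolding tile_sum_def by (intro sum.cong) (auto simp: gather_def)

lemma tile_sum_gather_insert:
  assumes "finite W" "W \<inter> insert z Y = {}"
  shows "tile_sum (gather p Y z a) (insert z W) = a + tile_sum p W"
proof -
  have "z \<notin> W" using assms(2) by blast
  then show ?thesis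
    using assms tile_sum_gather_disjoint[OF assms(2)] by (simp add: tile_sum_def gather_def)
qed

lemma game_step_absorb:
  assumes "e < n" "p e = None" "finite W" "W \<subseteq> {i. p i \<noteq> None}"
    and "tile_sum p W + 1 \<in> A"
  shows "game_step n A p (gather p W e (tile_sum p W + 1))"
proof -
  let ?p' = "p(e := Some 1)"
  have "e \<notin> W" using assms(2,4) by auto
  then have "(\<Sum>j\<in>W. the (?p' j)) = tile_sum p W"
    unfolding tile_sum_def by (intro sum.cong) auto
  then have absorbed: "tile_sum ?p' (insert e W) = tile_sum p W + 1"
    using assms(3) \<open>e \<notin> W\<close> by (simp add: tile_sum_def)
  have "merge_phase A ?p' (gather p W e (tile_sum p W + 1)) {insert e W} (\<lambda>_. e)"
    by unfold_locales (use assms \<open>e \<notin> W\<close> absorbed in \<open>auto simp: gather_def\<close>)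
  then show ?thesis
    unfolding game_step_def merge_iff_merge_phase using assms(1,2) by blast
qed

lemma reach_gather_two_cells:
  assumes A: "{1, 2} \<subseteq> A" and cells: "a < n" "b < n" "a \<noteq> b" "p a = None" "p b = None"
    and W: "finite W" "W \<subseteq> {i. p i \<noteq> None}" and sum: "tile_sum p W + 3 \<in> A"
  shows "(game_step n A)\<^sup>*\<^sup>* p (gather p ({a, b} \<union> W) a (tile_sum p W + 3))"
proof -
  have disj: "W \<inter> {a, b} = {}" using W cells by auto
  define p1 where "p1 = gather p {} a 1"
  define p2 where "p2 = gather p1 {a} b 2"
  have "game_step n A p (gather p {} a (tile_sum p {} + 1))"
    using A cells by (intro game_step_absorb) (auto simp: tile_sum_def)
  then have s1: "game_step n A p p1" by (simp add: p1_def tile_sum_def)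
  have sum1: "tile_sum p1 {a} = 1" by (simp add: p1_def tile_sum_def gather_def)
  have "game_step n A p1 (gather p1 {a} b (tile_sum p1 {a} + 1))"
  proof (rule game_step_absorb)
    show "tile_sum p1 {a} + 1 \<in> A" using sum1 A by (simp add: numeral_2_eq_2)
  qed (use cells in \<open>auto simp: p1_def gather_def\<close>)
  then have s2: "game_step n A p1 p2" by (simp add: p2_def sum1 numeral_2_eq_2)
  have "tile_sum p2 (insert b W) = 2 + tile_sum p W"
    using W disj by (simp add: p2_def p1_def tile_sum_gather_insert tile_sum_gather_disjoint)
  moreover have "game_step n A p2 (gather p2 (insert b W) a (tile_sum p2 (insert b W) + 1))"
  proof (rule game_step_absorb)
    show "tile_sum p2 (insert b W) + 1 \<in> A" using calculation sum by (simp add: eval_nat_numeral)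
  qed (use cells W disj in \<open>auto simp: p1_def p2_def gather_def\<close>)
  ultimately have s3: "game_step n A p2 (gather p2 (insert b W) a (tile_sum p W + 3))"
    by (simp add: eval_nat_numeral)
  have "gather p2 (insert b W) a (tile_sum p W + 3)
        = gather p ({a, b} \<union> W) a (tile_sum p W + 3)"
    by (auto simp: p1_def p2_def gather_def)
  then show ?thesis using s1 s2 s3 by (metis converse_rtranclp_into_rtranclp rtranclp.rtrancl_refl)
qed

lemma reach_gather_three_cells:
  assumes A: "{1, 2, 3} \<subseteq> A"
    and cells: "a < n" "b < n" "c < n" "distinct [a, b, c]" "p a = None" "p b = None" "p c = None"
    and W: "finite W" "W \<subseteq> {i. p i \<noteq> None}" and sum: "tile_sum p W + 5 \<in> A"
  shows "(game_step n A)\<^sup>*\<^sup>* p (gather p ({a, b, c} \<union> W) c (tile_sum p W + 5))"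
proof -
  have disj: "W \<inter> {a, b, c} = {}" using W cells by auto
  define p3 where "p3 = gather p {a, b} a 3"
  define p4 where "p4 = gather p3 {} b 1"
  have "(game_step n A)\<^sup>*\<^sup>* p (gather p ({a, b} \<union> {}) a (tile_sum p {} + 3))"
    using A cells by (intro reach_gather_two_cells) (auto simp: tile_sum_def)
  then have s123: "(game_step n A)\<^sup>*\<^sup>* p p3" by (simp add: p3_def tile_sum_def)
  have "game_step n A p3 (gather p3 {} b (tile_sum p3 {} + 1))"
    using A cells by (intro game_step_absorb) (auto simp: p3_def gather_def tile_sum_def)
  then have s4: "game_step n A p3 p4" by (simp add: p4_def tile_sum_def)
  have "tile_sum p4 (insert b (insert a W)) = 1 + tile_sum p3 (insert a W)"
    unfolding p4_def by (rule tile_sum_gather_insert) (use W cells disj in auto)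
  moreover have "tile_sum p3 (insert a W) = 3 + tile_sum p W"
    unfolding p3_def by (rule tile_sum_gather_insert) (use W disj in auto)
  ultimately have sum4: "tile_sum p4 (insert b (insert a W)) = 1 + (3 + tile_sum p W)" by simp
  have "game_step n A p4
          (gather p4 (insert b (insert a W)) c (tile_sum p4 (insert b (insert a W)) + 1))"
  proof (rule game_step_absorb)
    show "tile_sum p4 (insert b (insert a W)) + 1 \<in> A" using sum4 sum by (simp add: eval_nat_numeral)
  qed (use cells W disj in \<open>auto simp: p3_def p4_def gather_def\<close>)
  then have s5: "game_step n A p4 (gather p4 (insert b (insert a W)) c (tile_sum p W + 5))"
    using sum4 by (simp add: eval_nat_numeral)
  have "gather p4 (insert b (insert a W)) c (tile_sum p W + 5)
        = gather p ({a, b, c} \<union> W) c (tile_sum p W + 5)"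
    using cells by (auto simp: p3_def p4_def gather_def)
  then show ?thesis using s123 s4 s5
    by (metis rtranclp.rtrancl_into_rtrancl)
qed

lemma reach_gather_max_tile:
  assumes "1 \<le> k" "finite E" "card E = k" "E \<subseteq> {..<n}" "\<forall>i\<in>E. p i = None"
    and "finite W" "W \<subseteq> {i. p i \<noteq> None}" "tile_sum p W + max_tile k \<in> A5"
  shows "\<exists>z\<in>E. (game_step n A5)\<^sup>*\<^sup>* p (gather p (E \<union> W) z (tile_sum p W + max_tile k))"
  using assms
proof (induction k arbitrary: p E W rule: less_induct)
  case (less k)
  note k = less.prems(1) and E = less.prems(2-5) and W = less.prems(6,7) and sum = less.prems(8)
  consider "k = 1" | "k = 2" | "k = 3" | "4 \<le> k" using k by linarith
  then show ?case
  proof cases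
    case 1
    then obtain e where e: "E = {e}" using E(2) card_1_singletonE by blast
    have "game_step n A5 p (gather p W e (tile_sum p W + 1))"
      using E W sum 1 e by (intro game_step_absorb) auto
    moreover have "gather p W e (tile_sum p W + 1) = gather p (E \<union> W) e (tile_sum p W + max_tile k)"
      using 1 e by (auto simp: gather_def)
    ultimately show ?thesis using e by auto
  next
    case 2
    then obtain a b where ab: "E = {a, b}" "a \<noteq> b" using E(2) card_2_iff by metis
    have "(game_step n A5)\<^sup>*\<^sup>* p (gather p ({a, b} \<union> W) a (tile_sum p W + 3))"
      using E W sum 2 ab by (intro reach_gather_two_cells) (auto simp: numeral_eq_Suc)
    then show ?thesis using ab 2 by (auto simp: numeral_eq_Suc)
  next
    case 3
    then obtain a b c where abc: "E = {a, b, c}" "distinct [a, b, c]"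
      using E(2) card_3_iff by (metis distinct_length_2_or_more distinct_singleton empty_set list.simps(15))
    have "(game_step n A5)\<^sup>*\<^sup>* p (gather p ({a, b, c} \<union> W) c (tile_sum p W + 5))"
      using E W sum 3 abc by (intro reach_gather_three_cells) (auto simp: numeral_eq_Suc)
    then show ?thesis using abc 3 by (auto simp: numeral_eq_Suc)
  next
    case 4
    txt \<open>Assemble \<open>max_tile (k - 1)\<close> in \<open>k - 1\<close> of the cells, then assemble it again in the
      \<open>k - 1\<close> cells other than the one holding it, absorbing the first copy.\<close>
    then obtain x where x: "x \<in> E" using E(2) by (metis card.empty ex_in_conv not_numeral_le_zero)
    define E' where "E' = E - {x}"
    have E': "finite E'" "card E' = k - 1" "E' \<subseteq> {..<n}" "\<forall>i\<in>E'. p i = None"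
      using E x by (auto simp: E'_def)
    have "\<exists>z\<in>E'. (game_step n A5)\<^sup>*\<^sup>* p (gather p (E' \<union> {}) z (tile_sum p {} + max_tile (k - 1)))"
      using 4 E' max_tile_in_A5[of "k - 1"] by (intro less.IH) (auto simp: tile_sum_def)
    then obtain z where z: "z \<in> E'"
      and reach1: "(game_step n A5)\<^sup>*\<^sup>* p (gather p E' z (max_tile (k - 1)))"
      by (auto simp: tile_sum_def)
    define p1 where "p1 = gather p E' z (max_tile (k - 1))"
    have zE: "z \<in> E" using z by (simp add: E'_def)
    have disj: "W \<inter> insert z E' = {}" using W E z by (auto simp: E'_def)
    have sum1: "tile_sum p1 (insert z W) = max_tile (k - 1) + tile_sum p W"
      unfolding p1_def using W(1) disj by (rule tile_sum_gather_insert)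
    have merged_value: "tile_sum p1 (insert z W) + max_tile (k - 1) = tile_sum p W + max_tile k"
      using sum1 max_tile_double[OF 4] by simp
    have "\<exists>z'\<in>E - {z}. (game_step n A5)\<^sup>*\<^sup>* p1
        (gather p1 ((E - {z}) \<union> insert z W) z' (tile_sum p1 (insert z W) + max_tile (k - 1)))"
    proof (rule less.IH)
      show "card (E - {z}) = k - 1" using E zE by simp
      show "\<forall>i\<in>E - {z}. p1 i = None" using E by (auto simp: p1_def gather_def)
      show "insert z W \<subseteq> {i. p1 i \<noteq> None}" using W disj by (auto simp: p1_def gather_def)
      show "tile_sum p1 (insert z W) + max_tile (k - 1) \<in> A5"
        unfolding merged_value by (rule sum)
    qed (use 4 E(1,3) W(1) in auto)
    then obtain z' where z': "z' \<in> E - {z}" and reach2: "(game_step n A5)\<^sup>*\<^sup>* p1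
        (gather p1 ((E - {z}) \<union> insert z W) z' (tile_sum p1 (insert z W) + max_tile (k - 1)))"
      by blast
    have "gather p1 ((E - {z}) \<union> insert z W) z' (tile_sum p1 (insert z W) + max_tile (k - 1))
          = gather p (E \<union> W) z' (tile_sum p W + max_tile k)"
    proof -
      have "(E - {z}) \<union> insert z W \<union> E' = E \<union> W" using zE by (auto simp: E'_def)
      then show ?thesis
        unfolding merged_value unfolding p1_def using gather_gather[of z "(E - {z}) \<union> insert z W" p E']
        by simp
    qed
    then have "(game_step n A5)\<^sup>*\<^sup>* p (gather p (E \<union> W) z' (tile_sum p W + max_tile k))"
      using reach1 reach2 unfolding p1_def by (simp add: rtranclp_trans)
    then show ?thesis using z' by blast
  qed
qed

lemma reach_total_value_add_max_tiles:
  assumes "finite E" "card E = k" "E \<subseteq> {..<n}" "\<forall>i\<in>E. p i = None"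
  shows "\<exists>q. (game_step n A5)\<^sup>*\<^sup>* p q \<and> total_value n q = total_value n p + (\<Sum>l=1..k. max_tile l)"
  using assms
proof (induction k arbitrary: p E)
  case 0
  then show ?case by auto
next
  case (Suc k)
  have "\<exists>z\<in>E. (game_step n A5)\<^sup>*\<^sup>* p (gather p (E \<union> {}) z (tile_sum p {} + max_tile (Suc k)))"
    using Suc.prems max_tile_in_A5[of "Suc k"] by (intro reach_gather_max_tile) (auto simp: tile_sum_def)
  then obtain z where z: "z \<in> E" and reach: "(game_step n A5)\<^sup>*\<^sup>* p (p(z := Some (max_tile (Suc k))))"
    using gather_empty_cells[OF Suc.prems(4)] by (auto simp: tile_sum_def)
  define p1 where "p1 = p(z := Some (max_tile (Suc k)))"
  have "total_value n p1 = total_value n p + max_tile (Suc k)"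
    unfolding total_value_eq p1_def
    using sum_update_empty_cell[of z n p tile_value] z Suc.prems by auto
  moreover have "\<exists>q. (game_step n A5)\<^sup>*\<^sup>* p1 q \<and>
      total_value n q = total_value n p1 + (\<Sum>l=1..k. max_tile l)"
    using Suc.prems z by (intro Suc.IH[of "E - {z}"]) (auto simp: p1_def)
  then obtain q where "(game_step n A5)\<^sup>*\<^sup>* p1 q"
    "total_value n q = total_value n p1 + (\<Sum>l=1..k. max_tile l)"
    by blast
  ultimately show ?case
    using reach by (intro exI[of _ q]) (auto simp: p1_def intro: rtranclp_trans)
qed

lemma sum_max_tile_eq_floor:
  assumes "1 \<le> n"
  shows "(\<Sum>l=1..n. max_tile l) = nat \<lfloor>(5::real) * 2 powr (real n - 2) - 1\<rfloor>"
proof (cases "n = 1")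
  case True
  have "(5::real) * 2 powr (real n - 2) - 1 = 3 / 2"
    using True by (simp add: powr_minus_divide)
  then show ?thesis using True by (simp add: floor_eq_iff)
next
  case False
  then obtain j where j: "n = Suc (Suc j)"
    using assms by (metis One_nat_def Suc_le_D le_SucE not_less_eq_eq)
  have "(2::real) powr (real n - 2) = 2 ^ j"
    using j by (simp add: powr_realpow)
  moreover have "(1::nat) \<le> 5 * 2 ^ j" by simp
  ultimately have "(5::real) * 2 powr (real n - 2) - 1 = real (5 * 2 ^ j - 1)"
    by (simp add: of_nat_diff)
  then show ?thesis
    using j sum_max_tile_Suc_Suc[of j] by (simp only: floor_of_nat nat_int)
qed

theorem mainTheorem14:
  fixes n :: nat
  assumes "n \<ge> 1"
  shows "Total n ({1, 2, 3} \<union> range (\<lambda>i::nat. 5 * 2 ^ i))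
           = enat (nat \<lfloor>(5::real) * 2 powr (real n - 2) - 1\<rfloor>)"
proof -
  obtain q where "reachable n A5 q" "total_value n q = (\<Sum>l=1..n. max_tile l)"
    using reach_total_value_add_max_tiles[of "{..<n}" n n "\<lambda>_. None"]
    by (auto simp: reachable_def total_value_def)
  then have "enat (\<Sum>l=1..n. max_tile l) \<le> Total n A5"
    unfolding Total_def by (metis SUP_upper mem_Collect_eq)
  then have "Total n A5 = enat (\<Sum>l=1..n. max_tile l)"
    using A5.Total_le by (rule antisym[rotated])
  then show ?thesis using sum_max_tile_eq_floor[OF assms] by simp
qed

end
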